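(* Let $G=(V,E)$ be a finite simple undirected connected graph. There exists a real constant $c>0$ such that for every nonempty proper subset $S\subset V$, \[ h^{\swarrow}(S)\;\le\;\frac{1}{|V\setminus S|}\Big(\sum_{u\in V\setminus S} d(u,S)\Big)\Big(\sum_{v\in V\setminus S} d(v)\Big)\;\le\; c\,|V\setminus S|^3 . \]
   Context: $d(v)$ is the degree of $v$, $d(u,v)$ the shortest-path distance and $d(u,S)=\min_{v\in S}d(u,v)$. A (simple) random walk moves from the current vertex $u$ to a uniformly random neighbor (probability $1/d(u)$); $H(u,S)$ is the expected number of steps for the walk started at $u$ to first reach a vertex of $S$, and $h^{\swarrow}(S)=\frac{\sum_{u\in V\setminus S}H(u,S)}{|V\setminus S|}$. *)

theory Defs
  imports Complex_Main
begin

definition simple_graph :: "'a set \<Rightarrow> ('a \<Rightarrow> 'a \<Rightarrow> bool) \<Rightarrow> bool" where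
  "simple_graph V E \<longleftrightarrow> finite V \<and> (\<forall>u v. E u v \<longrightarrow> u \<in> V \<and> v \<in> V)
     \<and> (\<forall>u v. E u v \<longrightarrow> E v u) \<and> (\<forall>u. \<not> E u u)"

definition deg :: "'a set \<Rightarrow> ('a \<Rightarrow> 'a \<Rightarrow> bool) \<Rightarrow> 'a \<Rightarrow> nat" where
  "deg V E v = card {u \<in> V. E v u}"

fun is_walk :: "'a set \<Rightarrow> ('a \<Rightarrow> 'a \<Rightarrow> bool) \<Rightarrow> 'a list \<Rightarrow> bool" where
  "is_walk V E [] = False"
| "is_walk V E [x] = (x \<in> V)"
| "is_walk V E (x # y # xs) = (x \<in> V \<and> E x y \<and> is_walk V E (y # xs))"

definition connected_graph :: "'a set \<Rightarrow> ('a \<Rightarrow> 'a \<Rightarrow> bool) \<Rightarrow> bool" where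
  "connected_graph V E \<longleftrightarrow> (\<forall>u\<in>V. \<forall>v\<in>V. \<exists>xs. is_walk V E xs \<and> hd xs = u \<and> last xs = v)"

definition gdist :: "'a set \<Rightarrow> ('a \<Rightarrow> 'a \<Rightarrow> bool) \<Rightarrow> 'a \<Rightarrow> 'a \<Rightarrow> nat" where
  "gdist V E u v = (LEAST n. \<exists>xs. is_walk V E xs \<and> hd xs = u \<and> last xs = v \<and> length xs = Suc n)"

definition gdist_set :: "'a set \<Rightarrow> ('a \<Rightarrow> 'a \<Rightarrow> bool) \<Rightarrow> 'a \<Rightarrow> 'a set \<Rightarrow> nat" where
  "gdist_set V E u S = Min (gdist V E u ` S)"

text \<open>Probability that the simple random walk follows the given vertex sequence
(given its first vertex): product of the transition probabilities 1/d(x) for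
each step x \<rightarrow> y along an edge.\<close>
fun walk_prob :: "'a set \<Rightarrow> ('a \<Rightarrow> 'a \<Rightarrow> bool) \<Rightarrow> 'a list \<Rightarrow> real" where
  "walk_prob V E [] = 0"
| "walk_prob V E [x] = 1"
| "walk_prob V E (x # y # xs) =
     (if E x y then 1 / real (deg V E x) else 0) * walk_prob V E (y # xs)"

definition hit_at_prob :: "'a set \<Rightarrow> ('a \<Rightarrow> 'a \<Rightarrow> bool) \<Rightarrow> 'a set \<Rightarrow> 'a \<Rightarrow> nat \<Rightarrow> real" where
  "hit_at_prob V E S u t =
     (\<Sum>xs\<in>{xs. set xs \<subseteq> V \<and> length xs = Suc t \<and> hd xs = u
               \<and> (\<forall>i<t. xs ! i \<notin> S) \<and> xs ! t \<in> S}. walk_prob V E xs)"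

definition hitting_time :: "'a set \<Rightarrow> ('a \<Rightarrow> 'a \<Rightarrow> bool) \<Rightarrow> 'a \<Rightarrow> 'a set \<Rightarrow> real" where
  "hitting_time V E u S = (\<Sum>t. real t * hit_at_prob V E S u t)"

definition avg_hitting_time :: "'a set \<Rightarrow> ('a \<Rightarrow> 'a \<Rightarrow> bool) \<Rightarrow> 'a set \<Rightarrow> real" where
  "avg_hitting_time V E S =
     (\<Sum>u\<in>V - S. hitting_time V E u S) / real (card (V - S))"

end

theory Submission
  imports Defs
begin

text \<open>The truncated expected hitting times a_N(u) = sum_{t<N} t P(T_S = t) vanish on S and, by the
  first-step decomposition and a_N \<le> a_{N+1}, satisfy d(u) a(u) \<le> d(u) + sum_{w~u} a(w).
  Every such a is bounded by D d(u,S), where D = sum_{v \<notin> S} d(v), by induction on the level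
  k = d(u,S): the excess b = max 0 (a - D (k-1)) vanishes below level k and satisfies the same
  inequality, so summing it over U = {x. d(x,S) \<ge> k} and using the symmetry of E gives
  sum_{y \<in> U} b(y) |N(y) - U| \<le> sum_{x \<in> U} d(x) \<le> D; a vertex on level k has a neighbour
  outside U, hence excess at most D. Averaging over V - S gives the first inequality; the second
  holds with c = diam(G) |V| + 1, as d(u,S) \<le> diam(G) and d(v) \<le> |V|.\<close>

abbreviation neighbours :: "'a set \<Rightarrow> ('a \<Rightarrow> 'a \<Rightarrow> bool) \<Rightarrow> 'a \<Rightarrow> 'a set" where
  "neighbours V E u \<equiv> {w \<in> V. E u w}"

lemma walk_prob_nonneg: "walk_prob V E xs \<ge> 0"
  by (induction V E xs rule: walk_prob.induct) auto

lemma hit_at_prob_nonneg: "hit_at_prob V E S u t \<ge> 0"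
  unfolding hit_at_prob_def by (intro sum_nonneg walk_prob_nonneg)

lemma hit_at_prob_0: "u \<in> V \<Longrightarrow> hit_at_prob V E S u 0 = (if u \<in> S then 1 else 0)"
proof -
  assume "u \<in> V"
  then have "{xs. set xs \<subseteq> V \<and> length xs = Suc 0 \<and> hd xs = u \<and> (\<forall>i<0. xs ! i \<notin> S) \<and> xs ! 0 \<in> S}
      = (if u \<in> S then {[u]} else {})"
    by (auto simp: length_Suc_conv)
  then show ?thesis unfolding hit_at_prob_def by auto
qed

lemma hit_at_prob_Suc_mem: "u \<in> S \<Longrightarrow> hit_at_prob V E S u (Suc t) = 0"
proof -
  assume "u \<in> S"
  then have "{xs. set xs \<subseteq> V \<and> length xs = Suc (Suc t) \<and> hd xs = u
      \<and> (\<forall>i<Suc t. xs ! i \<notin> S) \<and> xs ! Suc t \<in> S} = {}"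
    by (auto simp: length_Suc_conv)
  then show ?thesis unfolding hit_at_prob_def by (simp only: sum.empty)
qed

lemma hit_paths_Suc_eq_Cons:
  assumes "u \<in> V" "u \<notin> S"
  shows "{xs. set xs \<subseteq> V \<and> length xs = Suc (Suc t) \<and> hd xs = u
            \<and> (\<forall>i<Suc t. xs ! i \<notin> S) \<and> xs ! Suc t \<in> S}
       = (\<lambda>ys. u # ys) ` {ys. set ys \<subseteq> V \<and> length ys = Suc t \<and> (\<forall>i<t. ys ! i \<notin> S) \<and> ys ! t \<in> S}"
  (is "?L = (\<lambda>ys. u # ys) ` ?A")
proof (intro set_eqI iffI)
  fix xs assume "xs \<in> ?L"
  then obtain ys where "xs = u # ys" "ys \<in> ?A"
    by (cases xs) (auto, metis Suc_mono nth_Cons_Suc)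
  then show "xs \<in> (\<lambda>ys. u # ys) ` ?A" by blast
next
  fix xs assume "xs \<in> (\<lambda>ys. u # ys) ` ?A"
  then obtain ys where "xs = u # ys" "ys \<in> ?A" by blast
  with assms show "xs \<in> ?L" by (auto simp: less_Suc_eq_0_disj)
qed

lemma hit_at_prob_Suc:
  assumes "finite V" "u \<in> V" "u \<notin> S"
  shows "hit_at_prob V E S u (Suc t) = (\<Sum>w\<in>neighbours V E u. hit_at_prob V E S w t) / real (deg V E u)"
proof -
  define A where "A = {ys. set ys \<subseteq> V \<and> length ys = Suc t \<and> (\<forall>i<t. ys ! i \<notin> S) \<and> ys ! t \<in> S}"
  define g where "g = (\<lambda>w. if E u w then 1 / real (deg V E u) else 0)"
  have "finite A"
    unfolding A_def by (rule finite_subset[OF _ finite_lists_length_eq[OF assms(1)]]) auto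
  have "hit_at_prob V E S u (Suc t) = (\<Sum>ys\<in>A. walk_prob V E (u # ys))"
    unfolding hit_at_prob_def hit_paths_Suc_eq_Cons[OF assms(2,3)] A_def
    by (subst sum.reindex) (auto simp: inj_on_def)
  also have "\<dots> = (\<Sum>ys\<in>A. g (hd ys) * walk_prob V E ys)"
    by (rule sum.cong) (auto simp: A_def g_def length_Suc_conv)
  also have "\<dots> = (\<Sum>w\<in>V. \<Sum>ys\<in>{ys \<in> A. hd ys = w}. g (hd ys) * walk_prob V E ys)"
    by (rule sum.group[symmetric, OF \<open>finite A\<close> assms(1)]) (auto simp: A_def intro!: hd_in_set)
  also have "\<dots> = (\<Sum>w\<in>V. g w * hit_at_prob V E S w t)"
    unfolding hit_at_prob_def A_def by (intro sum.cong) (auto simp: sum_distrib_left conj_ac)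
  also have "\<dots> = (\<Sum>w\<in>V. if E u w then hit_at_prob V E S w t / real (deg V E u) else 0)"
    unfolding g_def by (rule sum.cong) auto
  also have "\<dots> = (\<Sum>w\<in>neighbours V E u. hit_at_prob V E S w t / real (deg V E u))"
    by (simp add: sum.inter_filter assms(1))
  finally show ?thesis
    by (simp add: sum_divide_distrib)
qed

definition hit_prob_before :: "'a set \<Rightarrow> ('a \<Rightarrow> 'a \<Rightarrow> bool) \<Rightarrow> 'a set \<Rightarrow> 'a \<Rightarrow> nat \<Rightarrow> real" where
  "hit_prob_before V E S u N = (\<Sum>t<N. hit_at_prob V E S u t)"

definition partial_hitting_time :: "'a set \<Rightarrow> ('a \<Rightarrow> 'a \<Rightarrow> bool) \<Rightarrow> 'a set \<Rightarrow> 'a \<Rightarrow> nat \<Rightarrow> real" where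
  "partial_hitting_time V E S u N = (\<Sum>t<N. real t * hit_at_prob V E S u t)"

lemma hit_prob_before_Suc:
  assumes "finite V" "u \<in> V"
  shows "hit_prob_before V E S u (Suc N) = (if u \<in> S then 1
           else (\<Sum>w\<in>neighbours V E u. hit_prob_before V E S w N) / real (deg V E u))"
proof (cases "u \<in> S")
  case True
  with assms show ?thesis
    unfolding hit_prob_before_def sum.lessThan_Suc_shift by (simp add: hit_at_prob_0 hit_at_prob_Suc_mem)
next
  case False
  have "hit_prob_before V E S u (Suc N) = (\<Sum>t<N. hit_at_prob V E S u (Suc t))"
    unfolding hit_prob_before_def sum.lessThan_Suc_shift using assms False by (simp add: hit_at_prob_0)
  also have "\<dots> = (\<Sum>w\<in>neighbours V E u. hit_prob_before V E S w N) / real (deg V E u)"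
    unfolding hit_prob_before_def hit_at_prob_Suc[OF assms False]
    by (simp add: sum_divide_distrib[symmetric] sum.swap[of _ "{..<N}"])
  finally show ?thesis using False by simp
qed

lemma partial_hitting_time_Suc:
  assumes "finite V" "u \<in> V"
  shows "partial_hitting_time V E S u (Suc N) = (if u \<in> S then 0
           else (\<Sum>w\<in>neighbours V E u. partial_hitting_time V E S w N + hit_prob_before V E S w N)
                  / real (deg V E u))"
proof (cases "u \<in> S")
  case True
  with assms show ?thesis
    unfolding partial_hitting_time_def sum.lessThan_Suc_shift
    by (simp add: hit_at_prob_0 hit_at_prob_Suc_mem del: of_nat_Suc)
next
  case False
  have "partial_hitting_time V E S u (Suc N) = (\<Sum>t<N. real (Suc t) * hit_at_prob V E S u (Suc t))"
    unfolding partial_hitting_time_def sum.lessThan_Suc_shift using assms False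
    by (simp add: hit_at_prob_0 del: of_nat_Suc)
  also have "\<dots> = (\<Sum>w\<in>neighbours V E u. \<Sum>t<N. real (Suc t) * hit_at_prob V E S w t) / real (deg V E u)"
    unfolding hit_at_prob_Suc[OF assms False]
    by (simp add: sum_distrib_left sum_divide_distrib[symmetric] sum.swap[of _ "{..<N}"] del: of_nat_Suc)
  also have "\<dots> = (\<Sum>w\<in>neighbours V E u. partial_hitting_time V E S w N + hit_prob_before V E S w N)
                  / real (deg V E u)"
    unfolding partial_hitting_time_def hit_prob_before_def by (simp add: sum.distrib[symmetric] algebra_simps)
  finally show ?thesis using False by simp
qed

lemma hit_prob_before_le_1:
  assumes "finite V" "u \<in> V"
  shows "hit_prob_before V E S u N \<le> 1"
  using assms(2)
proof (induction N arbitrary: u)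
  case 0
  then show ?case by (simp add: hit_prob_before_def)
next
  case (Suc N)
  have "(\<Sum>w\<in>neighbours V E u. hit_prob_before V E S w N) \<le> real (deg V E u)"
    using sum_mono[of "neighbours V E u" _ "\<lambda>_. 1::real"] Suc.IH by (simp add: deg_def)
  then have "(\<Sum>w\<in>neighbours V E u. hit_prob_before V E S w N) / real (deg V E u) \<le> 1"
    by (cases "deg V E u = 0") (auto simp: divide_le_eq)
  then show ?case using hit_prob_before_Suc[OF assms(1) Suc.prems] by simp
qed

lemma partial_hitting_time_nonneg: "partial_hitting_time V E S u N \<ge> 0"
  unfolding partial_hitting_time_def by (intro sum_nonneg mult_nonneg_nonneg hit_at_prob_nonneg) auto

lemma partial_hitting_time_mem:
  "finite V \<Longrightarrow> u \<in> V \<Longrightarrow> u \<in> S \<Longrightarrow> partial_hitting_time V E S u N = 0"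
  using partial_hitting_time_Suc[of V u E S] by (cases N) (auto simp: partial_hitting_time_def)

lemma partial_hitting_time_subsolution:
  assumes "finite V" "u \<in> V"
  shows "real (deg V E u) * partial_hitting_time V E S u N
           \<le> real (deg V E u) + (\<Sum>w\<in>neighbours V E u. partial_hitting_time V E S w N)"
proof (cases "deg V E u = 0 \<or> u \<in> S")
  case True
  then show ?thesis
    using partial_hitting_time_mem[OF assms] by (auto intro!: sum_nonneg add_nonneg_nonneg partial_hitting_time_nonneg)
next
  case False
  have "partial_hitting_time V E S u N \<le> partial_hitting_time V E S u (Suc N)"
    unfolding partial_hitting_time_def by (simp add: hit_at_prob_nonneg)
  then have "real (deg V E u) * partial_hitting_time V E S u N
      \<le> (\<Sum>w\<in>neighbours V E u. partial_hitting_time V E S w N + hit_prob_before V E S w N)"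
    using partial_hitting_time_Suc[OF assms, of E S N] False by (simp add: field_simps)
  also have "\<dots> \<le> (\<Sum>w\<in>neighbours V E u. partial_hitting_time V E S w N + 1)"
    by (intro sum_mono add_left_mono hit_prob_before_le_1[OF assms(1)]) simp
  finally show ?thesis by (simp add: sum.distrib deg_def)
qed

lemma hitting_time_le:
  assumes "\<And>N. partial_hitting_time V E S u N \<le> B"
  shows "hitting_time V E u S \<le> B"
proof -
  have nonneg: "\<And>t. 0 \<le> real t * hit_at_prob V E S u t"
    by (simp add: hit_at_prob_nonneg)
  have "summable (\<lambda>t. real t * hit_at_prob V E S u t)"
    by (rule summableI_nonneg_bounded[OF nonneg]) (use assms in \<open>simp add: partial_hitting_time_def\<close>)
  then show ?thesis
    unfolding hitting_time_def
    by (rule suminf_le_const) (use assms in \<open>simp add: partial_hitting_time_def\<close>)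
qed

lemma gdist_attained:
  assumes "connected_graph V E" "u \<in> V" "v \<in> V"
  obtains xs where "is_walk V E xs" "hd xs = u" "last xs = v" "length xs = Suc (gdist V E u v)"
proof -
  obtain xs where xs: "is_walk V E xs" "hd xs = u" "last xs = v"
    using assms unfolding connected_graph_def by blast
  then have "length xs = Suc (length xs - 1)" by (cases xs) auto
  with xs have "\<exists>n xs. is_walk V E xs \<and> hd xs = u \<and> last xs = v \<and> length xs = Suc n" by blast
  then have "\<exists>xs. is_walk V E xs \<and> hd xs = u \<and> last xs = v \<and> length xs = Suc (gdist V E u v)"
    unfolding gdist_def by (rule LeastI_ex)
  with that show ?thesis by blast
qed

lemma gdist_le_walk_length:
  "is_walk V E xs \<Longrightarrow> hd xs = u \<Longrightarrow> last xs = v \<Longrightarrow> length xs = Suc n \<Longrightarrow> gdist V E u v \<le> n"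
  unfolding gdist_def by (rule Least_le) blast

lemma gdist_eq_0_iff:
  assumes "connected_graph V E" "u \<in> V" "v \<in> V"
  shows "gdist V E u v = 0 \<longleftrightarrow> u = v"
proof
  assume "gdist V E u v = 0"
  then obtain xs where "is_walk V E xs" "hd xs = u" "last xs = v" "length xs = Suc 0"
    using gdist_attained[OF assms] by metis
  then show "u = v" by (auto simp: length_Suc_conv)
next
  assume "u = v"
  then show "gdist V E u v = 0"
    using gdist_le_walk_length[of V E "[u]" u u 0] assms(2) by simp
qed

lemma gdist_Suc_imp_neighbour:
  assumes "simple_graph V E" "connected_graph V E" "u \<in> V" "v \<in> V" "gdist V E u v = Suc k"
  obtains w where "w \<in> neighbours V E u" "gdist V E w v \<le> k"
proof -
  obtain xs where xs: "is_walk V E xs" "hd xs = u" "last xs = v" "length xs = Suc (Suc k)"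
    using gdist_attained[OF assms(2-4)] assms(5) by metis
  then obtain y zs where xs_eq: "xs = u # y # zs" by (auto simp: length_Suc_conv)
  with xs have "gdist V E y v \<le> k"
    by (intro gdist_le_walk_length[of V E "y # zs"]) auto
  moreover have "y \<in> neighbours V E u"
    using xs(1) xs_eq assms(1) unfolding simple_graph_def by auto
  ultimately show ?thesis using that by blast
qed

lemma gdist_set_le: "finite S \<Longrightarrow> v \<in> S \<Longrightarrow> gdist_set V E u S \<le> gdist V E u v"
  unfolding gdist_set_def by (intro Min_le) auto

lemma gdist_set_attained:
  assumes "finite S" "S \<noteq> {}"
  obtains v where "v \<in> S" "gdist_set V E u S = gdist V E u v"
proof -
  have "Min (gdist V E u ` S) \<in> gdist V E u ` S" using assms by (intro Min_in) auto
  then show ?thesis using that unfolding gdist_set_def by auto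
qed

lemma gdist_set_eq_0_iff:
  assumes "connected_graph V E" "finite S" "S \<noteq> {}" "S \<subseteq> V" "u \<in> V"
  shows "gdist_set V E u S = 0 \<longleftrightarrow> u \<in> S"
proof
  assume "gdist_set V E u S = 0"
  moreover obtain v where "v \<in> S" "gdist_set V E u S = gdist V E u v"
    using gdist_set_attained[OF assms(2,3)] .
  ultimately show "u \<in> S"
    using gdist_eq_0_iff[OF assms(1,5)] assms(4) by auto
next
  assume "u \<in> S"
  then show "gdist_set V E u S = 0"
    using gdist_set_le[OF assms(2)] gdist_eq_0_iff[OF assms(1,5,5)] by (metis le_zero_eq)
qed

lemma gdist_set_Suc_imp_neighbour:
  assumes "simple_graph V E" "connected_graph V E" "finite S" "S \<noteq> {}" "S \<subseteq> V" "u \<in> V"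
    and "gdist_set V E u S = Suc k"
  obtains w where "w \<in> neighbours V E u" "gdist_set V E w S \<le> k"
proof -
  obtain v where v: "v \<in> S" "gdist_set V E u S = gdist V E u v"
    using gdist_set_attained[OF assms(3,4)] by blast
  have "v \<in> V" using v(1) assms(5) by auto
  moreover have "gdist V E u v = Suc k" using v(2) assms(7) by simp
  ultimately obtain w where w: "w \<in> neighbours V E u" "gdist V E w v \<le> k"
    using gdist_Suc_imp_neighbour[OF assms(1,2,6)] by blast
  moreover have "gdist_set V E w S \<le> k"
    using gdist_set_le[OF assms(3) v(1), of V E w] w(2) by simp
  ultimately show ?thesis using that by blast
qed

lemma subsolution_pos_part:
  fixes a :: "'a \<Rightarrow> real"
  assumes "real (deg V E x) * a x \<le> real (deg V E x) + (\<Sum>y\<in>neighbours V E x. a y)"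
  shows "real (deg V E x) * max 0 (a x - c)
           \<le> real (deg V E x) + (\<Sum>y\<in>neighbours V E x. max 0 (a y - c))"
proof (cases "a x \<le> c")
  case True
  then show ?thesis by (simp add: sum_nonneg)
next
  case False
  have "real (deg V E x) * max 0 (a x - c)
      = real (deg V E x) * a x - (\<Sum>y\<in>neighbours V E x. c)"
    using False by (simp add: deg_def algebra_simps)
  also have "\<dots> \<le> real (deg V E x) + (\<Sum>y\<in>neighbours V E x. a y - c)"
    using assms by (simp add: sum_subtractf)
  also have "\<dots> \<le> real (deg V E x) + (\<Sum>y\<in>neighbours V E x. max 0 (a y - c))"
    by (intro add_left_mono sum_mono) simp
  finally show ?thesis .
qed

lemma subsolution_boundary_sum_le:
  fixes b :: "'a \<Rightarrow> real"
  assumes "simple_graph V E" "U \<subseteq> V"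
    and zero: "\<And>x. x \<in> V - U \<Longrightarrow> b x = 0"
    and sub: "\<And>x. x \<in> U \<Longrightarrow> real (deg V E x) * b x \<le> real (deg V E x) + (\<Sum>y\<in>neighbours V E x. b y)"
  shows "(\<Sum>y\<in>U. b y * real (card (neighbours (V - U) E y))) \<le> (\<Sum>x\<in>U. real (deg V E x))"
proof -
  have "finite V" and sym: "\<And>x y. E x y \<Longrightarrow> E y x"
    using assms(1) unfolding simple_graph_def by auto
  then have "finite U" using assms(2) finite_subset by blast
  have inner: "(\<Sum>y\<in>neighbours V E x. b y) = (\<Sum>y\<in>U. if E x y then b y else 0)" for x
  proof -
    have "(\<Sum>y\<in>neighbours V E x. b y) = (\<Sum>y\<in>{y \<in> U. E x y}. b y)"
      by (rule sum.mono_neutral_right) (use \<open>finite V\<close> assms(2) zero in auto)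
    then show ?thesis by (simp add: sum.inter_filter \<open>finite U\<close>)
  qed
  have "(\<Sum>x\<in>U. \<Sum>y\<in>neighbours V E x. b y) = (\<Sum>y\<in>U. \<Sum>x\<in>U. if E x y then b y else 0)"
    unfolding inner by (rule sum.swap)
  also have "\<dots> = (\<Sum>y\<in>U. b y * real (card (neighbours U E y)))"
  proof -
    have "{x \<in> U. E x y} = neighbours U E y" for y using sym by blast
    with \<open>finite U\<close> show ?thesis by (simp add: sum.If_cases Int_def mult.commute)
  qed
  finally have swap: "(\<Sum>x\<in>U. \<Sum>y\<in>neighbours V E x. b y) = \<dots>" .
  have split_deg: "real (deg V E y) = real (card (neighbours U E y)) + real (card (neighbours (V - U) E y))" for y
  proof -
    have "{x\<in>V. E y x} = neighbours U E y \<union> neighbours (V - U) E y" using assms(2) by auto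
    moreover have "card (neighbours U E y \<union> neighbours (V - U) E y) = card (neighbours U E y) + card (neighbours (V - U) E y)"
      by (rule card_Un_disjoint) (use \<open>finite V\<close> \<open>finite U\<close> in auto)
    ultimately show ?thesis unfolding deg_def by simp
  qed
  have "(\<Sum>x\<in>U. real (deg V E x) * b x) \<le> (\<Sum>x\<in>U. real (deg V E x)) + (\<Sum>x\<in>U. \<Sum>y\<in>neighbours V E x. b y)"
    using sum_mono[OF sub, of U] by (simp add: sum.distrib)
  then show ?thesis
    unfolding swap split_deg by (simp add: algebra_simps sum.distrib)
qed

lemma subsolution_le_of_boundary_neighbour:
  fixes b :: "'a \<Rightarrow> real"
  assumes "simple_graph V E" "U \<subseteq> V"
    and nonneg: "\<And>x. b x \<ge> 0"
    and zero: "\<And>x. x \<in> V - U \<Longrightarrow> b x = 0"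
    and sub: "\<And>x. x \<in> U \<Longrightarrow> real (deg V E x) * b x \<le> real (deg V E x) + (\<Sum>y\<in>neighbours V E x. b y)"
    and "y \<in> U" "w \<in> neighbours V E y" "w \<notin> U"
  shows "b y \<le> (\<Sum>x\<in>U. real (deg V E x))"
proof -
  have "finite V" using assms(1) unfolding simple_graph_def by auto
  then have "finite U" using assms(2) finite_subset by blast
  have "w \<in> neighbours (V - U) E y" using assms(7,8) by auto
  then have "card (neighbours (V - U) E y) > 0" using \<open>finite V\<close> by (auto simp: card_gt_0_iff)
  then have "b y \<le> b y * real (card (neighbours (V - U) E y))"
    using nonneg[of y] by (simp add: mult_le_cancel_left1)
  also have "\<dots> \<le> (\<Sum>y\<in>U. b y * real (card (neighbours (V - U) E y)))"
    by (rule member_le_sum) (use assms(6) \<open>finite U\<close> nonneg in auto)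
  also have "\<dots> \<le> (\<Sum>x\<in>U. real (deg V E x))"
    by (rule subsolution_boundary_sum_le[OF assms(1,2) zero sub])
  finally show ?thesis .
qed

lemma subsolution_le_gdist_set:
  fixes a :: "'a \<Rightarrow> real"
  assumes sg: "simple_graph V E" and conn: "connected_graph V E" and "S \<noteq> {}" "S \<subseteq> V"
    and on_S: "\<And>u. u \<in> S \<Longrightarrow> a u \<le> 0"
    and sub: "\<And>u. u \<in> V - S \<Longrightarrow> real (deg V E u) * a u \<le> real (deg V E u) + (\<Sum>w\<in>neighbours V E u. a w)"
    and "u \<in> V"
  shows "a u \<le> (\<Sum>v\<in>V - S. real (deg V E v)) * real (gdist_set V E u S)"
proof -
  define D where "D = (\<Sum>v\<in>V - S. real (deg V E v))"
  have "finite V" using sg unfolding simple_graph_def by auto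
  then have "finite S" using assms(4) finite_subset by blast
  note dist_0_iff = gdist_set_eq_0_iff[OF conn \<open>finite S\<close> assms(3,4)]
  have dist_on_S: "gdist_set V E x S = 0" if "x \<in> S" for x
    using dist_0_iff[of x] that assms(4) by blast
  have "D \<ge> 0" unfolding D_def by (simp add: sum_nonneg)
  have "\<forall>u\<in>V. gdist_set V E u S \<le> k \<longrightarrow> a u \<le> D * real k" for k
  proof (induction k)
    case 0
    then show ?case using dist_0_iff on_S by auto
  next
    case (Suc j)
    define U where "U = {x \<in> V. j < gdist_set V E x S}"
    define b where "b x = max 0 (a x - D * real j)" for x
    have "U \<subseteq> V - S" unfolding U_def using dist_on_S by fastforce
    have zero: "b x = 0" if "x \<in> V - U" for x
    proof -
      have "x \<in> V" "gdist_set V E x S \<le> j" using that unfolding U_def by auto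
      then have "a x \<le> D * real j" using Suc.IH by blast
      then show ?thesis unfolding b_def by simp
    qed
    have b_sub: "real (deg V E x) * b x \<le> real (deg V E x) + (\<Sum>y\<in>neighbours V E x. b y)"
      if "x \<in> U" for x
      unfolding b_def by (rule subsolution_pos_part, rule sub) (use \<open>U \<subseteq> V - S\<close> that in blast)
    show ?case
    proof (intro ballI impI)
      fix u assume u: "u \<in> V" "gdist_set V E u S \<le> Suc j"
      show "a u \<le> D * real (Suc j)"
      proof (cases "gdist_set V E u S \<le> j")
        case True
        then have "a u \<le> D * real j" using Suc.IH u(1) by blast
        also have "\<dots> \<le> D * real (Suc j)" using \<open>D \<ge> 0\<close> by (intro mult_left_mono) auto
        finally show ?thesis .
      next
        case False
        then have "gdist_set V E u S = Suc j" using u(2) by simp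
        then obtain w where w: "w \<in> neighbours V E u" "gdist_set V E w S \<le> j"
          using gdist_set_Suc_imp_neighbour[OF sg conn \<open>finite S\<close> assms(3,4) u(1)] by blast
        have "b u \<le> (\<Sum>x\<in>U. real (deg V E x))"
          by (rule subsolution_le_of_boundary_neighbour[OF sg _ _ zero b_sub _ w(1)])
             (use \<open>U \<subseteq> V - S\<close> False u w(2) in \<open>auto simp: U_def b_def\<close>)
        also have "\<dots> \<le> D"
          unfolding D_def by (rule sum_mono2) (use \<open>finite V\<close> \<open>U \<subseteq> V - S\<close> in auto)
        finally show ?thesis unfolding b_def by (simp add: algebra_simps)
      qed
    qed
  qed
  then show ?thesis using \<open>u \<in> V\<close> unfolding D_def by blast
qed

lemma hitting_time_le_gdist_set:
  assumes "simple_graph V E" "connected_graph V E" "S \<noteq> {}" "S \<subseteq> V" "u \<in> V"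
  shows "hitting_time V E u S \<le> (\<Sum>v\<in>V - S. real (deg V E v)) * real (gdist_set V E u S)"
proof (rule hitting_time_le)
  have "finite V" using assms(1) unfolding simple_graph_def by auto
  fix N
  show "partial_hitting_time V E S u N \<le> (\<Sum>v\<in>V - S. real (deg V E v)) * real (gdist_set V E u S)"
  proof (rule subsolution_le_gdist_set[OF assms(1-4) _ _ assms(5)])
    fix v assume "v \<in> S"
    then show "partial_hitting_time V E S v N \<le> 0"
      using partial_hitting_time_mem[OF \<open>finite V\<close>] assms(4) by auto
  next
    fix v assume "v \<in> V - S"
    then show "real (deg V E v) * partial_hitting_time V E S v N
        \<le> real (deg V E v) + (\<Sum>w\<in>neighbours V E v. partial_hitting_time V E S w N)"
      using partial_hitting_time_subsolution[OF \<open>finite V\<close>] by blast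
  qed
qed

lemma avg_hitting_time_le:
  assumes "simple_graph V E" "connected_graph V E" "S \<noteq> {}" "S \<subseteq> V"
  shows "avg_hitting_time V E S
           \<le> (1 / real (card (V - S))) * real (\<Sum>u\<in>V - S. gdist_set V E u S)
               * real (\<Sum>v\<in>V - S. deg V E v)"
proof -
  have "(\<Sum>u\<in>V - S. hitting_time V E u S)
      \<le> (\<Sum>u\<in>V - S. (\<Sum>v\<in>V - S. real (deg V E v)) * real (gdist_set V E u S))"
    by (intro sum_mono hitting_time_le_gdist_set[OF assms]) auto
  also have "\<dots> = real (\<Sum>u\<in>V - S. gdist_set V E u S) * real (\<Sum>v\<in>V - S. deg V E v)"
    by (simp add: sum_distrib_left mult.commute)
  finally show ?thesis
    unfolding avg_hitting_time_def by (simp add: divide_right_mono)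
qed

definition diameter :: "'a set \<Rightarrow> ('a \<Rightarrow> 'a \<Rightarrow> bool) \<Rightarrow> nat" where
  "diameter V E = Max ((\<lambda>(u, v). gdist V E u v) ` (V \<times> V))"

lemma gdist_set_le_diameter:
  assumes "finite V" "S \<subseteq> V" "S \<noteq> {}" "u \<in> V"
  shows "gdist_set V E u S \<le> diameter V E"
proof -
  obtain v where "v \<in> S" using assms(3) by blast
  then have "gdist_set V E u S \<le> gdist V E u v"
    using assms(1,2) finite_subset by (intro gdist_set_le) auto
  also have "\<dots> \<le> diameter V E"
    unfolding diameter_def using assms \<open>v \<in> S\<close>
    by (intro Max_ge) (auto intro!: image_eqI[where x = "(u, v)"])
  finally show ?thesis .
qed

lemma deg_le_card: "finite V \<Longrightarrow> deg V E u \<le> card V"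
  unfolding deg_def by (intro card_mono) auto

lemma distance_degree_product_le_cube:
  assumes "finite V" "S \<noteq> {}" "S \<subset> V"
  shows "(1 / real (card (V - S))) * real (\<Sum>u\<in>V - S. gdist_set V E u S) * real (\<Sum>v\<in>V - S. deg V E v)
           \<le> (real (diameter V E) * real (card V) + 1) * real (card (V - S)) ^ 3"
proof -
  define n where "n = real (card (V - S))"
  have "n \<ge> 1" unfolding n_def using assms by (simp add: Suc_le_eq card_gt_0_iff)
  have dist: "real (\<Sum>u\<in>V - S. gdist_set V E u S) \<le> n * real (diameter V E)"
  proof -
    have "(\<Sum>u\<in>V - S. gdist_set V E u S) \<le> (\<Sum>u\<in>V - S. diameter V E)"
      using assms by (intro sum_mono gdist_set_le_diameter) auto
    then have "real (\<Sum>u\<in>V - S. gdist_set V E u S) \<le> real (card (V - S) * diameter V E)"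
      by (simp only: sum_constant of_nat_id of_nat_le_iff)
    then show ?thesis unfolding n_def by simp
  qed
  have degs: "real (\<Sum>v\<in>V - S. deg V E v) \<le> n * real (card V)"
  proof -
    have "(\<Sum>v\<in>V - S. deg V E v) \<le> (\<Sum>v\<in>V - S. card V)"
      using assms(1) by (intro sum_mono deg_le_card)
    then have "real (\<Sum>v\<in>V - S. deg V E v) \<le> real (card (V - S) * card V)"
      by (simp only: sum_constant of_nat_id of_nat_le_iff)
    then show ?thesis unfolding n_def by simp
  qed
  have "(1 / n) * real (\<Sum>u\<in>V - S. gdist_set V E u S) * real (\<Sum>v\<in>V - S. deg V E v)
      \<le> (1 / n) * (n * real (diameter V E)) * (n * real (card V))"
    using dist degs \<open>n \<ge> 1\<close> by (intro mult_mono) (auto simp: sum_nonneg)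
  also have "\<dots> = real (diameter V E) * real (card V) * n"
    using \<open>n \<ge> 1\<close> by (simp add: field_simps)
  also have "\<dots> \<le> (real (diameter V E) * real (card V) + 1) * n ^ 3"
    using \<open>n \<ge> 1\<close> by (intro mult_mono) (auto simp: power3_eq_cube order_trans[OF _ mult_mono[of 1 n 1 n]])
  finally show ?thesis unfolding n_def .
qed

theorem proposition2:
  fixes V :: "'a set" and E :: "'a \<Rightarrow> 'a \<Rightarrow> bool"
  assumes "simple_graph V E" and "connected_graph V E"
  shows "\<exists>c::real. c > 0 \<and> (\<forall>S. S \<noteq> {} \<and> S \<subset> V \<longrightarrow>
     avg_hitting_time V E S
       \<le> (1 / real (card (V - S))) * real (\<Sum>u\<in>V - S. gdist_set V E u S)
            * real (\<Sum>v\<in>V - S. deg V E v)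
     \<and> (1 / real (card (V - S))) * real (\<Sum>u\<in>V - S. gdist_set V E u S)
            * real (\<Sum>v\<in>V - S. deg V E v)
       \<le> c * real (card (V - S)) ^ 3)"
proof (intro exI conjI allI impI)
  have "finite V" using assms(1) unfolding simple_graph_def by auto
  show "real (diameter V E) * real (card V) + 1 > 0" by (simp add: add_nonneg_pos)
  fix S assume "S \<noteq> {} \<and> S \<subset> V"
  then show "avg_hitting_time V E S
       \<le> (1 / real (card (V - S))) * real (\<Sum>u\<in>V - S. gdist_set V E u S) * real (\<Sum>v\<in>V - S. deg V E v)"
    and "(1 / real (card (V - S))) * real (\<Sum>u\<in>V - S. gdist_set V E u S) * real (\<Sum>v\<in>V - S. deg V E v)
       \<le> (real (diameter V E) * real (card V) + 1) * real (card (V - S)) ^ 3"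
    using avg_hitting_time_le[OF assms] distance_degree_product_le_cube[OF \<open>finite V\<close>] by auto
qed

end
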